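(* Let $G$ be a discrete group, $\mathfrak g$ a finite string of elements of $G$ and $\mathcal E$ a finite partition of $G$. Suppose the graph $\Gamma(G,\mathfrak g,\mathcal E)$ has a directed edge from a vertex $A=(a_C)_{C\in Con(\mathfrak g,\mathcal E)}$ to a vertex $B=(b_C)_{C\in Con(\mathfrak g,\mathcal E)}$ such that $a_C\in\{0,1\}$ and $b_C-a_C>0$ for every $C\in Con(\mathfrak g,\mathcal E)$. Then $G$ admits a paradoxical decomposition (whose pieces are subsets of the sets $x_0(C)$ and their translates).
   Context: Configurations: for $\mathfrak g=(g_1,\dots,g_n)$ and a partition $\mathcal E=\{E_1,\dots,E_m\}$ of $G$, a configuration is $C=(c_0,\dots,c_n)\in\{1,\dots,m\}^{n+1}$ such that some $x\in G$ has $x\in E_{c_0}$ and $g_ix\in E_{c_i}$ ($1\le i\le n$); $Con(\mathfrak g,\mathcal E)$ is the finite set of configurations, and $x_0(C)=E_{c_0}\cap\bigcap_{j=1}^ng_j^{-1}E_{c_j}$; the sets $x_0(C)$ partition $G$. The graph $\Gamma=\Gamma(G,\mathfrak g,\mathcal E)$: its vertices are all tuples $(a_C)_{C\in Con(\mathfrak g,\mathcal E)}$ of nonnegative integers. There is a directed edge from $A=(a_C)$ to $B=(b_C)$ if the set $\bigsqcup_{C:\,a_C\neq0}x_0(C)$ admits a partition into $b=\sum_Cb_C$ pieces, indexed as $\{A_{C,k}: C\in Con(\mathfrak g,\mathcal E),\,1\le k\le b_C\}$, together with elements $h_{C,k}\in G$ such that $h_{C,k}A_{C,k}=x_0(C)$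 for every $C$ and every $1\le k\le b_C$. A paradoxical decomposition of $G$: pairwise disjoint subsets $A_1,\dots,A_r,B_1,\dots,B_s$ of $G$ and elements $a_i,b_j\in G$ with $G=\bigcup_ia_iA_i=\bigcup_jb_jB_j$. *)

theory Defs
  imports Main
begin

text \<open>The group G is an arbitrary (not necessarily commutative) group, written
additively via the type class group_add; the action of g on x is g + x and
a left translate g A is the image ((+) g) ` A.  The string g_1..g_n is a list
gs (gs ! (i-1) = g_i); the partition E_1..E_m is a list Es (Es ! (i-1) = E_i),
so configurations are lists of indices in {0..<m} of length n+1.\<close>

definition is_partition :: "'a set list \<Rightarrow> bool" where
  "is_partition Es \<longleftrightarrow>
     (\<forall>i<length Es. Es ! i \<noteq> {}) \<and>
     (\<forall>i<length Es. \<forall>j<length Es. i \<noteq> j \<longrightarrow> Es ! i \<inter> Es ! j = {}) \<and>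
     (\<Union>i<length Es. Es ! i) = UNIV"

definition x0 :: "'a::group_add list \<Rightarrow> 'a set list \<Rightarrow> nat list \<Rightarrow> 'a set" where
  "x0 gs Es C = {x. x \<in> Es ! (C ! 0) \<and> (\<forall>i<length gs. gs ! i + x \<in> Es ! (C ! Suc i))}"

definition Con :: "'a::group_add list \<Rightarrow> 'a set list \<Rightarrow> nat list set" where
  "Con gs Es = {C. length C = Suc (length gs) \<and> (\<forall>i<length C. C ! i < length Es)
                   \<and> x0 gs Es C \<noteq> {}}"

text \<open>Vertices of Gamma are tuples of nonnegative integers indexed by Con; we
represent them as functions nat list => nat, only the values on Con matter.\<close>

definition edge :: "'a::group_add list \<Rightarrow> 'a set list \<Rightarrow> (nat list \<Rightarrow> nat) \<Rightarrow> (nat list \<Rightarrow> nat) \<Rightarrow> bool" where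
  "edge gs Es A B \<longleftrightarrow>
     (\<exists>(P :: nat list \<Rightarrow> nat \<Rightarrow> 'a set) (h :: nat list \<Rightarrow> nat \<Rightarrow> 'a).
        (\<forall>C\<in>Con gs Es. \<forall>k\<in>{1..B C}. ((+) (h C k)) ` (P C k) = x0 gs Es C) \<and>
        (\<forall>C\<in>Con gs Es. \<forall>k\<in>{1..B C}. \<forall>D\<in>Con gs Es. \<forall>l\<in>{1..B D}.
            (C, k) \<noteq> (D, l) \<longrightarrow> P C k \<inter> P D l = {}) \<and>
        (\<Union>C\<in>Con gs Es. \<Union>k\<in>{1..B C}. P C k) = (\<Union>C\<in>{C\<in>Con gs Es. A C \<noteq> 0}. x0 gs Es C))"

definition paradoxical :: "'a::group_add itself \<Rightarrow> bool" where
  "paradoxical _ \<longleftrightarrow>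
     (\<exists>(r::nat) (s::nat) (As :: nat \<Rightarrow> 'a set) (Bs :: nat \<Rightarrow> 'a set) (a :: nat \<Rightarrow> 'a) (b :: nat \<Rightarrow> 'a).
        (\<forall>i<r. \<forall>j<r. i \<noteq> j \<longrightarrow> As i \<inter> As j = {}) \<and>
        (\<forall>i<s. \<forall>j<s. i \<noteq> j \<longrightarrow> Bs i \<inter> Bs j = {}) \<and>
        (\<forall>i<r. \<forall>j<s. As i \<inter> Bs j = {}) \<and>
        (\<Union>i<r. ((+) (a i)) ` As i) = UNIV \<and>
        (\<Union>j<s. ((+) (b j)) ` Bs j) = UNIV)"

end

theory Submission
  imports Defs "HOL-Library.Disjoint_Sets"
begin

text \<open>The sets x0(C) partition G.  Each of them is a translate of the piece with
index 1, so these pieces form one copy of G.  A second, disjoint copy consists of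
the pieces with index 2 for those C with a_C = 1 (they exist because b_C \<ge> 2 there)
together with the sets x0(C) with a_C = 0 themselves: the latter avoid all pieces,
which lie inside the union of the x0(C) with a_C = 1.\<close>

lemma partition_index_unique:
  assumes "is_partition Es" "i < length Es" "j < length Es" "x \<in> Es ! i" "x \<in> Es ! j"
  shows "i = j"
  using assms unfolding is_partition_def by blast

lemma disjoint_family_on_x0:
  assumes partition: "is_partition Es"
  shows "disjoint_family_on (x0 gs Es) (Con gs Es)"
  unfolding disjoint_family_on_def
proof (intro ballI impI, rule ccontr)
  fix C D assume C: "C \<in> Con gs Es" and D: "D \<in> Con gs Es" and "C \<noteq> D"
    and "x0 gs Es C \<inter> x0 gs Es D \<noteq> {}"
  then obtain x where x: "x \<in> x0 gs Es C" "x \<in> x0 gs Es D" by blast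
  have "C ! i = D ! i" if "i < Suc (length gs)" for i
  proof (cases i)
    case 0
    with that x C D show ?thesis
      by (intro partition_index_unique[OF partition, of _ _ x]) (auto simp: Con_def x0_def)
  next
    case (Suc j)
    with that x C D show ?thesis
      by (intro partition_index_unique[OF partition, of _ _ "gs ! j + x"])
         (auto simp: Con_def x0_def)
  qed
  with C D have "C = D" by (simp add: Con_def nth_equalityI)
  with \<open>C \<noteq> D\<close> show False ..
qed

lemma UN_x0_eq_UNIV:
  assumes partition: "is_partition Es"
  shows "(\<Union>C\<in>Con gs Es. x0 gs Es C) = UNIV"
proof -
  obtain idx where idx: "\<And>y. idx y < length Es \<and> y \<in> Es ! idx y"
    using partition unfolding is_partition_def by (metis UN_iff UNIV_I lessThan_iff)
  have "x \<in> (\<Union>C\<in>Con gs Es. x0 gs Es C)" for x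
  proof -
    define C where "C = idx x # map (\<lambda>g. idx (g + x)) gs"
    have x: "x \<in> x0 gs Es C" using idx by (simp add: x0_def C_def)
    moreover have "C \<in> Con gs Es"
      using idx x by (auto simp: Con_def C_def nth_Cons split: nat.split)
    ultimately show ?thesis by blast
  qed
  then show ?thesis by blast
qed

lemma finite_Con: "finite (Con gs Es)"
proof (rule finite_subset)
  show "Con gs Es \<subseteq> {C. set C \<subseteq> {..<length Es} \<and> length C = Suc (length gs)}"
    by (auto simp: Con_def in_set_conv_nth)
  show "finite {C. set C \<subseteq> {..<length Es} \<and> length C = Suc (length gs)}"
    by (rule finite_lists_length_eq) simp
qed

lemma paradoxicalI:
  fixes As :: "'i \<Rightarrow> 'a::group_add set" and Bs :: "'j \<Rightarrow> 'a set"
  assumes "finite I" "finite J"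
    and "disjoint_family_on As I" "disjoint_family_on Bs J"
    and "\<And>i j. i \<in> I \<Longrightarrow> j \<in> J \<Longrightarrow> As i \<inter> Bs j = {}"
    and "(\<Union>i\<in>I. (+) (a i) ` As i) = UNIV" "(\<Union>j\<in>J. (+) (b j) ` Bs j) = UNIV"
  shows "paradoxical TYPE('a)"
proof -
  obtain f where f: "bij_betw f {..<card I} I"
    using ex_bij_betw_nat_finite[OF \<open>finite I\<close>] by (auto simp: atLeast0LessThan)
  obtain g where g: "bij_betw g {..<card J} J"
    using ex_bij_betw_nat_finite[OF \<open>finite J\<close>] by (auto simp: atLeast0LessThan)
  have f_inj: "f m \<noteq> f n" if "m < card I" "n < card I" "m \<noteq> n" for m n
    using f that by (auto simp: bij_betw_def inj_on_def)
  have g_inj: "g m \<noteq> g n" if "m < card J" "n < card J" "m \<noteq> n" for m n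
    using g that by (auto simp: bij_betw_def inj_on_def)
  have f_in: "f m \<in> I" if "m < card I" for m
    using f that bij_betwE by blast
  have g_in: "g m \<in> J" if "m < card J" for m
    using g that bij_betwE by blast
  have reindex_I: "(\<Union>m<card I. F (f m)) = (\<Union>i\<in>I. F i)" for F :: "'i \<Rightarrow> 'a set"
    by (metis f bij_betw_imp_surj_on image_image)
  have reindex_J: "(\<Union>m<card J. F (g m)) = (\<Union>j\<in>J. F j)" for F :: "'j \<Rightarrow> 'a set"
    by (metis g bij_betw_imp_surj_on image_image)
  show ?thesis
    unfolding paradoxical_def
  proof (rule exI[of _ "card I"], rule exI[of _ "card J"], rule exI[of _ "As \<circ> f"],
      rule exI[of _ "Bs \<circ> g"], rule exI[of _ "a \<circ> f"], rule exI[of _ "b \<circ> g"],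
      intro conjI allI impI)
    fix m n assume "m < card I" "n < card I" "m \<noteq> n"
    then show "(As \<circ> f) m \<inter> (As \<circ> f) n = {}"
      using assms(3) f_inj f_in by (simp add: disjoint_family_on_def)
  next
    fix m n assume "m < card J" "n < card J" "m \<noteq> n"
    then show "(Bs \<circ> g) m \<inter> (Bs \<circ> g) n = {}"
      using assms(4) g_inj g_in by (simp add: disjoint_family_on_def)
  next
    fix m n assume "m < card I" "n < card J"
    then show "(As \<circ> f) m \<inter> (Bs \<circ> g) n = {}"
      using assms(5) f_in g_in by simp
  qed (use assms(6,7) reindex_I[of "\<lambda>i. (+) (a i) ` As i"]
        reindex_J[of "\<lambda>j. (+) (b j) ` Bs j"] in simp_all)
qed

lemma paradoxical_of_translated_pieces:
  fixes X :: "'i \<Rightarrow> 'a::group_add set" and P :: "'i \<Rightarrow> nat \<Rightarrow> 'a set"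
  assumes "finite I" "S \<subseteq> I"
    and X_disj: "disjoint_family_on X I" and X_cover: "(\<Union>i\<in>I. X i) = UNIV"
    and P_transl: "\<And>i k. i \<in> I \<Longrightarrow> k \<in> {1..B i} \<Longrightarrow> (+) (h i k) ` P i k = X i"
    and P_disj: "\<And>i k j l. i \<in> I \<Longrightarrow> k \<in> {1..B i} \<Longrightarrow> j \<in> I \<Longrightarrow> l \<in> {1..B j} \<Longrightarrow>
                   (i, k) \<noteq> (j, l) \<Longrightarrow> P i k \<inter> P j l = {}"
    and P_sub: "(\<Union>i\<in>I. \<Union>k\<in>{1..B i}. P i k) \<subseteq> (\<Union>j\<in>S. X j)"
    and B_pos: "\<And>i. i \<in> I \<Longrightarrow> 1 \<le> B i" and B_two: "\<And>i. i \<in> S \<Longrightarrow> 2 \<le> B i"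
  shows "paradoxical TYPE('a)"
proof -
  have P_X_disj: "P i k \<inter> X j = {}" if "i \<in> I" "k \<in> {1..B i}" "j \<in> I - S" for i k j
  proof -
    have "X s \<inter> X j = {}" if "s \<in> S" for s
      using disjoint_family_onD[OF X_disj] \<open>S \<subseteq> I\<close> \<open>j \<in> I - S\<close> that by blast
    then show ?thesis using P_sub that(1,2) by blast
  qed
  define Bs where "Bs i = (if i \<in> S then P i 2 else X i)" for i
  define b where "b i = (if i \<in> S then h i 2 else 0)" for i
  show ?thesis
  proof (rule paradoxicalI[of I I "\<lambda>i. P i 1" Bs "\<lambda>i. h i 1" b])
    show "disjoint_family_on (\<lambda>i. P i 1) I"
      using P_disj B_pos by (auto simp: disjoint_family_on_def)
    show "disjoint_family_on Bs I"
      using P_disj P_X_disj X_disj B_two \<open>S \<subseteq> I\<close>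
      by (auto simp: disjoint_family_on_def Bs_def Int_commute)
    show "P i 1 \<inter> Bs j = {}" if "i \<in> I" "j \<in> I" for i j
      unfolding Bs_def using P_disj P_X_disj B_pos B_two that \<open>S \<subseteq> I\<close> by auto
    show "(\<Union>i\<in>I. (+) (h i 1) ` P i 1) = UNIV"
      using P_transl B_pos X_cover by simp
    have "(+) (b i) ` Bs i = X i" if "i \<in> I" for i
      using P_transl[OF that, of 2] B_two by (simp add: Bs_def b_def)
    then show "(\<Union>i\<in>I. (+) (b i) ` Bs i) = UNIV"
      using X_cover by simp
  qed (use \<open>finite I\<close> in simp_all)
qed

theorem proposition4p2:
  fixes gs :: "'a::group_add list" and Es :: "'a set list"
    and A B :: "nat list \<Rightarrow> nat"
  assumes "is_partition Es"
    and "edge gs Es A B"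
    and "\<forall>C\<in>Con gs Es. A C \<in> {0, 1}"
    and "\<forall>C\<in>Con gs Es. B C > A C"
  shows "paradoxical TYPE('a)"
proof -
  obtain P h where pieces:
    "\<forall>C\<in>Con gs Es. \<forall>k\<in>{1..B C}. (+) (h C k) ` P C k = x0 gs Es C"
    "\<forall>C\<in>Con gs Es. \<forall>k\<in>{1..B C}. \<forall>D\<in>Con gs Es. \<forall>l\<in>{1..B D}.
       (C, k) \<noteq> (D, l) \<longrightarrow> P C k \<inter> P D l = {}"
    "(\<Union>C\<in>Con gs Es. \<Union>k\<in>{1..B C}. P C k) = (\<Union>C\<in>{C\<in>Con gs Es. A C \<noteq> 0}. x0 gs Es C)"
    using \<open>edge gs Es A B\<close> unfolding edge_def by (elim exE conjE) iprover
  show ?thesis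
  proof (rule paradoxical_of_translated_pieces[where I = "Con gs Es"
        and S = "{C\<in>Con gs Es. A C \<noteq> 0}" and X = "x0 gs Es" and P = P and h = h and B = B])
    show "1 \<le> B C" if "C \<in> Con gs Es" for C
      using assms(4) that by fastforce
    show "2 \<le> B C" if "C \<in> {C\<in>Con gs Es. A C \<noteq> 0}" for C
      using assms(3,4) that by fastforce
  qed (use pieces \<open>is_partition Es\<close> in
        \<open>auto simp: finite_Con disjoint_family_on_x0 UN_x0_eq_UNIV\<close>)
qed

end
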